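(* Let $\mathbb{k}$ be a field of characteristic $0$ containing a primitive $n$-th root of unity $\omega$, let $H=T_{n^2}(\omega)$ be the Taft Hopf algebra, and let $A=A_n(\omega)=\mathbb{k}[z]/(z^n-\omega)$ with $u$ the image of $z$. Let $a_i=(\omega-1)^i\omega^{i(i+1)/2}$ and let $\rho:A\to H\otimes A$ be the algebra homomorphism determined by $$\rho(u)=\sum_{i=0}^{n-1}a_i\,x^ig^{-(i+1)}\otimes u^{i+1}$$ (this is well defined since $\rho(u)^n=\omega\,(1\otimes 1)$). Then $A$ is an $H$-comodule algebra via $\rho$, i.e. $(\mathrm{id}\otimes\rho)\rho=(\Delta\otimes\mathrm{id})\rho$, if and only if for all integers $0\le k,s\le n-1$, $$\sum_{\{0\le i_1,\dots,i_{s+1}\le k\ \mid\ \sum_{j=1}^{s+1}i_j=k\}}\omega^{\sum_{j=2}^{s+1}i_j(j-1)}=\begin{cases}\binom{k+s}{k}_{\omega} & \text{if } k+s<n,\\ 0 & \text{if } k+s\ge n.\end{cases}$$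
   Context: The Taft Hopf algebra is $H=T_{n^2}(\omega)=\mathbb{k}\langle x,g\mid x^n=0,\ g^n=1,\ xg=\omega gx\rangle$ with $\Delta(g)=g\otimes g$, $\Delta(x)=x\otimes 1+g\otimes x$, $\epsilon(g)=1$, $\epsilon(x)=0$, $S(g)=g^{-1}$, $S(x)=-g^{-1}x$. The $q$-binomial coefficient is $\binom{k+s}{k}_q=\frac{(1-q^{s+1})\cdots(1-q^{s+k})}{(1-q)\cdots(1-q^k)}$ (a polynomial in $q$), evaluated at $q=\omega$. *)

theory Defs
  imports Main "HOL-Library.FuncSet" "HOL-Computational_Algebra.Polynomial"
begin

text \<open>An element of an algebra with (finite) basis indexed by a set B of indices is
  represented by its coefficient function 'i => 'k.  A multiplication is given by
  structure constants m p q, the vector representing the product of basis elements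
  p and q.\<close>

definition bvec :: "'i \<Rightarrow> 'i \<Rightarrow> 'k::field" where
  "bvec p = (\<lambda>t. if t = p then 1 else 0)"

definition mulv :: "'i set \<Rightarrow> ('i \<Rightarrow> 'i \<Rightarrow> 'i \<Rightarrow> 'k::field)
    \<Rightarrow> ('i \<Rightarrow> 'k) \<Rightarrow> ('i \<Rightarrow> 'k) \<Rightarrow> ('i \<Rightarrow> 'k)" where
  "mulv B m v w = (\<lambda>t. \<Sum>p\<in>B. \<Sum>q\<in>B. v p * w q * m p q t)"

definition powv :: "'i set \<Rightarrow> ('i \<Rightarrow> 'i \<Rightarrow> 'i \<Rightarrow> 'k::field) \<Rightarrow> ('i \<Rightarrow> 'k)
    \<Rightarrow> ('i \<Rightarrow> 'k) \<Rightarrow> nat \<Rightarrow> ('i \<Rightarrow> 'k)" where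
  "powv B m one v k = (mulv B m v ^^ k) one"

definition tens :: "('i \<Rightarrow> 'k::field) \<Rightarrow> ('j \<Rightarrow> 'k) \<Rightarrow> ('i \<times> 'j \<Rightarrow> 'k)" where
  "tens v w = (\<lambda>(p, q). v p * w q)"

definition tmul :: "('i \<Rightarrow> 'i \<Rightarrow> 'i \<Rightarrow> 'k::field) \<Rightarrow> ('j \<Rightarrow> 'j \<Rightarrow> 'j \<Rightarrow> 'k)
    \<Rightarrow> ('i \<times> 'j) \<Rightarrow> ('i \<times> 'j) \<Rightarrow> ('i \<times> 'j) \<Rightarrow> 'k" where
  "tmul m1 m2 = (\<lambda>(p1, p2) (q1, q2). tens (m1 p1 q1) (m2 p2 q2))"

definition linext :: "'i set \<Rightarrow> ('i \<Rightarrow> 'j \<Rightarrow> 'k::field) \<Rightarrow> ('i \<Rightarrow> 'k) \<Rightarrow> ('j \<Rightarrow> 'k)" where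
  "linext B f v = (\<lambda>t. \<Sum>p\<in>B. v p * f p t)"

text \<open>Basis g^a x^b, 0 <= a,b < n, indexed by (a,b).  Since x g = omega g x we have
  (g^a x^b)(g^c x^d) = omega^(b c) g^(a+c mod n) x^(b+d), which is 0 if b+d >= n.\<close>

definition taft_basis :: "nat \<Rightarrow> (nat \<times> nat) set" where
  "taft_basis n = {..<n} \<times> {..<n}"

definition taft_mult :: "nat \<Rightarrow> 'k::field \<Rightarrow> nat \<times> nat \<Rightarrow> nat \<times> nat \<Rightarrow> nat \<times> nat \<Rightarrow> 'k" where
  "taft_mult n \<omega> = (\<lambda>(a, b) (c, d).
     if b + d < n then (\<lambda>t. \<omega> ^ (b * c) * bvec ((a + c) mod n, b + d) t) else (\<lambda>t. 0))"

definition taft_one :: "nat \<times> nat \<Rightarrow> 'k::field" where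
  "taft_one = bvec (0, 0)"

definition taft_g :: "nat \<Rightarrow> nat \<times> nat \<Rightarrow> 'k::field" where
  "taft_g n = bvec (1 mod n, 0)"

definition taft_x :: "nat \<times> nat \<Rightarrow> 'k::field" where
  "taft_x = bvec (0, 1)"

definition taft_pow :: "nat \<Rightarrow> 'k::field \<Rightarrow> (nat \<times> nat \<Rightarrow> 'k) \<Rightarrow> nat \<Rightarrow> (nat \<times> nat \<Rightarrow> 'k)" where
  "taft_pow n \<omega> = powv (taft_basis n) (taft_mult n \<omega>) taft_one"

definition HH_basis :: "nat \<Rightarrow> ((nat \<times> nat) \<times> (nat \<times> nat)) set" where
  "HH_basis n = taft_basis n \<times> taft_basis n"

definition HH_mult :: "nat \<Rightarrow> 'k::field \<Rightarrow> _" where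
  "HH_mult n \<omega> = tmul (taft_mult n \<omega>) (taft_mult n \<omega>)"

definition HH_pow :: "nat \<Rightarrow> 'k::field \<Rightarrow> _" where
  "HH_pow n \<omega> = powv (HH_basis n) (HH_mult n \<omega>) (tens taft_one taft_one)"

definition taft_Delta :: "nat \<Rightarrow> 'k::field \<Rightarrow> nat \<times> nat \<Rightarrow> (nat \<times> nat) \<times> (nat \<times> nat) \<Rightarrow> 'k" where
  "taft_Delta n \<omega> = (\<lambda>(a, b).
     mulv (HH_basis n) (HH_mult n \<omega>)
       (HH_pow n \<omega> (tens (taft_g n) (taft_g n)) a)
       (HH_pow n \<omega> (\<lambda>t. tens taft_x taft_one t + tens (taft_g n) taft_x t) b))"

definition A_basis :: "nat \<Rightarrow> nat set" where
  "A_basis n = {..<n}"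

definition A_mult :: "nat \<Rightarrow> 'k::field \<Rightarrow> nat \<Rightarrow> nat \<Rightarrow> nat \<Rightarrow> 'k" where
  "A_mult n \<omega> i j = (if i + j < n then bvec (i + j) else (\<lambda>t. \<omega> * bvec (i + j - n) t))"

definition A_one :: "nat \<Rightarrow> 'k::field" where
  "A_one = bvec 0"

definition A_u :: "nat \<Rightarrow> 'k::field" where
  "A_u = bvec 1"

definition A_pow :: "nat \<Rightarrow> 'k::field \<Rightarrow> (nat \<Rightarrow> 'k) \<Rightarrow> nat \<Rightarrow> (nat \<Rightarrow> 'k)" where
  "A_pow n \<omega> = powv (A_basis n) (A_mult n \<omega>) A_one"

definition HA_basis :: "nat \<Rightarrow> ((nat \<times> nat) \<times> nat) set" where
  "HA_basis n = taft_basis n \<times> A_basis n"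

definition HA_mult :: "nat \<Rightarrow> 'k::field \<Rightarrow> _" where
  "HA_mult n \<omega> = tmul (taft_mult n \<omega>) (A_mult n \<omega>)"

definition HA_pow :: "nat \<Rightarrow> 'k::field \<Rightarrow> _" where
  "HA_pow n \<omega> = powv (HA_basis n) (HA_mult n \<omega>) (tens taft_one A_one)"

definition coeff_a :: "'k::field \<Rightarrow> nat \<Rightarrow> 'k" where
  "coeff_a \<omega> i = (\<omega> - 1) ^ i * \<omega> ^ (i * (i + 1) div 2)"

text \<open>rho(u) = sum_{i<n} a_i x^i g^{-(i+1)} \<otimes> u^{i+1}, where g^{-(i+1)} = g^{n-(i+1)}.\<close>

definition rho_u :: "nat \<Rightarrow> 'k::field \<Rightarrow> (nat \<times> nat) \<times> nat \<Rightarrow> 'k" where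
  "rho_u n \<omega> = (\<lambda>t. \<Sum>i<n. coeff_a \<omega> i *
      tens (mulv (taft_basis n) (taft_mult n \<omega>)
               (taft_pow n \<omega> taft_x i) (taft_pow n \<omega> (taft_g n) (n - (i + 1))))
           (A_pow n \<omega> A_u (i + 1)) t)"

definition rho :: "nat \<Rightarrow> 'k::field \<Rightarrow> (nat \<Rightarrow> 'k) \<Rightarrow> (nat \<times> nat) \<times> nat \<Rightarrow> 'k" where
  "rho n \<omega> = linext (A_basis n) (\<lambda>j. HA_pow n \<omega> (rho_u n \<omega>) j)"

definition id_rho :: "nat \<Rightarrow> 'k::field \<Rightarrow> ((nat \<times> nat) \<times> nat \<Rightarrow> 'k)
    \<Rightarrow> (nat \<times> nat) \<times> ((nat \<times> nat) \<times> nat) \<Rightarrow> 'k" where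
  "id_rho n \<omega> = linext (HA_basis n) (\<lambda>(p, j). tens (bvec p) (rho n \<omega> (bvec j)))"

definition Delta_id :: "nat \<Rightarrow> 'k::field \<Rightarrow> ((nat \<times> nat) \<times> nat \<Rightarrow> 'k)
    \<Rightarrow> (nat \<times> nat) \<times> ((nat \<times> nat) \<times> nat) \<Rightarrow> 'k" where
  "Delta_id n \<omega> = linext (HA_basis n)
     (\<lambda>(p, j). \<lambda>(h1, (h2, l)). tens (taft_Delta n \<omega> p) (bvec j) ((h1, h2), l))"

definition is_comodule_algebra :: "nat \<Rightarrow> 'k::field \<Rightarrow> bool" where
  "is_comodule_algebra n \<omega> \<longleftrightarrow>
     (\<forall>v. \<forall>t \<in> taft_basis n \<times> HA_basis n.
        id_rho n \<omega> (rho n \<omega> v) t = Delta_id n \<omega> (rho n \<omega> v) t)"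

definition primitive_root :: "nat \<Rightarrow> 'k::field \<Rightarrow> bool" where
  "primitive_root n \<omega> \<longleftrightarrow> 0 < n \<and> \<omega> ^ n = 1 \<and> (\<forall>m. 0 < m \<and> m < n \<longrightarrow> \<omega> ^ m \<noteq> 1)"

text \<open>Gaussian binomial (k+s choose k)_q as a polynomial in q (exact division).\<close>

definition qbinom_poly :: "nat \<Rightarrow> nat \<Rightarrow> 'k::field poly" where
  "qbinom_poly k s =
     (\<Prod>j\<in>{1..k}. 1 - monom 1 (s + j)) div (\<Prod>j\<in>{1..k}. 1 - monom 1 j)"

definition tuple_sum :: "'k::field \<Rightarrow> nat \<Rightarrow> nat \<Rightarrow> 'k" where
  "tuple_sum \<omega> k s =
     (\<Sum>i\<in>{i \<in> {1..s+1} \<rightarrow>\<^sub>E {0..k}. (\<Sum>j\<in>{1..s+1}. i j) = k}.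
        \<omega> ^ (\<Sum>j\<in>{2..s+1}. i j * (j - 1)))"

end

theory Submission
  imports Defs
begin

text \<open>Both sides of the equivalence hold. Splitting off the last entry of a tuple shows that the
  tuple sum obeys the recursion of the Gaussian binomial [k+s, k]_\<omega>, which vanishes for
  n \<le> k + s < 2n because its numerator then contains the factor 1 - \<omega>^n.

  For the coaction one computes \<rho>(u)^j = \<Sum>_b c(j,b) g^(-(b+j)) x^b \<otimes> u^(b+j) explicitly, where
  c(j,b) is the complete homogeneous symmetric polynomial of degree b in 1, \<omega>, \<dots>, \<omega>^(j-1)
  (a Gaussian binomial) times a monomial in \<omega> - 1 and \<omega>. Applying \<Delta> \<otimes> id brings in \<Delta>(x)^b
  through the q-binomial theorem, applying id \<otimes> \<rho> brings in the products c(j,b1) c(j+b1,b2)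
  (with j + b1 taken mod n), and the two agree by the \<omega>-Pochhammer identity
  c(j,b1) c(j+b1,b2) = c(j,b1+b2) [b1+b2, b2]_\<omega>, whose left side vanishes when b1 + b2 \<ge> n
  because the Gaussian binomials are n-periodic in their upper entry.\<close>

text \<open>The index map \<open>p\<close> need not be injective: coefficients of a repeated index add up.\<close>

definition lincomb :: "'a set \<Rightarrow> ('a \<Rightarrow> 'k::field) \<Rightarrow> ('a \<Rightarrow> 'i) \<Rightarrow> ('i \<Rightarrow> 'k)" where
  "lincomb I \<alpha> p = (\<lambda>t. \<Sum>i\<in>I. \<alpha> i * bvec (p i) t)"

lemma lincomb_apply:
  assumes "finite I"
  shows "lincomb I \<alpha> p t = (\<Sum>i\<in>{i\<in>I. p i = t}. \<alpha> i)"
proof -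
  have "lincomb I \<alpha> p t = (\<Sum>i\<in>I. if p i = t then \<alpha> i else 0)"
    unfolding lincomb_def bvec_def by (rule sum.cong) auto
  also have "\<dots> = (\<Sum>i\<in>{i\<in>I. p i = t}. \<alpha> i)"
    using assms by (simp add: sum.inter_filter)
  finally show ?thesis .
qed

lemma sum_lincomb_mult:
  assumes "finite B" "finite I" "p ` I \<subseteq> B"
  shows "(\<Sum>x\<in>B. lincomb I \<alpha> p x * f x) = (\<Sum>i\<in>I. \<alpha> i * f (p i))"
proof -
  have "(\<Sum>x\<in>B. lincomb I \<alpha> p x * f x) = (\<Sum>i\<in>I. \<Sum>x\<in>B. \<alpha> i * (bvec (p i) x * f x))"
    unfolding lincomb_def by (simp add: sum_distrib_right mult.assoc sum.swap[of _ B])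
  also have "\<dots> = (\<Sum>i\<in>I. \<Sum>x\<in>B. if x = p i then \<alpha> i * f (p i) else 0)"
    by (intro sum.cong refl) (auto simp: bvec_def)
  also have "\<dots> = (\<Sum>i\<in>I. \<alpha> i * f (p i))"
    using assms by (intro sum.cong refl) auto
  finally show ?thesis .
qed

lemma mulv_lincomb:
  assumes "finite B" "finite I" "finite J" "p ` I \<subseteq> B" "q ` J \<subseteq> B"
  shows "mulv B m (lincomb I \<alpha> p) (lincomb J \<beta> q) =
         (\<lambda>t. \<Sum>i\<in>I. \<Sum>j\<in>J. \<alpha> i * \<beta> j * m (p i) (q j) t)"
proof
  fix t
  have "mulv B m (lincomb I \<alpha> p) (lincomb J \<beta> q) t =
        (\<Sum>x\<in>B. lincomb I \<alpha> p x * (\<Sum>y\<in>B. lincomb J \<beta> q y * m x y t))"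
    unfolding mulv_def by (simp add: sum_distrib_left mult.assoc)
  also have "\<dots> = (\<Sum>i\<in>I. \<alpha> i * (\<Sum>j\<in>J. \<beta> j * m (p i) (q j) t))"
    using assms by (simp add: sum_lincomb_mult)
  finally show "mulv B m (lincomb I \<alpha> p) (lincomb J \<beta> q) t =
      (\<Sum>i\<in>I. \<Sum>j\<in>J. \<alpha> i * \<beta> j * m (p i) (q j) t)"
    by (simp add: sum_distrib_left mult.assoc)
qed

lemma mulv_bvec:
  assumes "finite B" "p \<in> B" "q \<in> B"
  shows "mulv B m (bvec p) (bvec q) = m p q"
proof -
  have "mulv B m (bvec p) (bvec q) =
      mulv B m (lincomb {()} (\<lambda>_. 1) (\<lambda>_. p)) (lincomb {()} (\<lambda>_. 1) (\<lambda>_. q))"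
    by (simp add: lincomb_def)
  also have "\<dots> = m p q"
    using assms by (simp add: mulv_lincomb)
  finally show ?thesis .
qed

lemma linext_lincomb:
  assumes "finite B" "finite I" "p ` I \<subseteq> B"
  shows "linext B f (lincomb I \<alpha> p) = (\<lambda>t. \<Sum>i\<in>I. \<alpha> i * f (p i) t)"
  unfolding linext_def using assms by (intro ext sum_lincomb_mult) auto

lemma linext_bvec: "finite B \<Longrightarrow> p \<in> B \<Longrightarrow> linext B f (bvec p) = f p"
  by (simp add: linext_def bvec_def if_distrib[of "\<lambda>c. c * _"] cong: if_cong)

lemma linext_sum:
  "linext B f (\<lambda>t. \<Sum>j\<in>J. v j * w j t) = (\<lambda>t. \<Sum>j\<in>J. v j * linext B f (w j) t)"
  unfolding linext_def
  by (intro ext) (simp add: sum_distrib_left sum_distrib_right mult_ac sum.swap[of _ B])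

lemma lincomb_cong:
  assumes "I = I'" "\<And>i. i \<in> I' \<Longrightarrow> \<alpha> i = \<alpha>' i" "\<And>i. i \<in> I' \<Longrightarrow> p i = p' i"
  shows "lincomb I \<alpha> p = lincomb I' \<alpha>' p'"
  unfolding lincomb_def using assms by (intro ext sum.cong) auto

lemma lincomb_mono_neutral:
  assumes "finite I'" "I \<subseteq> I'" "\<And>i. i \<in> I' - I \<Longrightarrow> \<alpha> i = 0"
  shows "lincomb I \<alpha> p = lincomb I' \<alpha> p"
  unfolding lincomb_def using assms by (intro ext sum.mono_neutral_left) auto

lemma lincomb_reindex:
  assumes "inj_on h J"
  shows "lincomb (h ` J) \<alpha> p = lincomb J (\<lambda>j. \<alpha> (h j)) (\<lambda>j. p (h j))"
  unfolding lincomb_def using assms by (simp add: sum.reindex)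

lemma lincomb_image:
  assumes "finite I" "finite J" "s ` I \<subseteq> J"
  shows "lincomb I \<alpha> (\<lambda>i. q (s i)) = lincomb J (\<lambda>j. \<Sum>i\<in>{i\<in>I. s i = j}. \<alpha> i) q"
proof
  fix t
  have "lincomb J (\<lambda>j. \<Sum>i\<in>{i\<in>I. s i = j}. \<alpha> i) q t
      = (\<Sum>j\<in>{j\<in>J. q j = t}. \<Sum>i\<in>{i\<in>{i\<in>I. q (s i) = t}. s i = j}. \<alpha> i)"
    using assms by (simp add: lincomb_apply) (intro sum.cong refl, auto)
  also have "\<dots> = (\<Sum>i\<in>{i\<in>I. q (s i) = t}. \<alpha> i)"
    using assms by (intro sum.group) auto
  finally show "lincomb I \<alpha> (\<lambda>i. q (s i)) t = lincomb J (\<lambda>j. \<Sum>i\<in>{i\<in>I. s i = j}. \<alpha> i) q t"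
    using assms by (simp add: lincomb_apply)
qed

lemma lincomb_if:
  assumes "finite I" "finite J"
  shows "(\<lambda>t. \<Sum>i\<in>I. \<Sum>j\<in>J. if P i j then \<gamma> i j * bvec (r i j) t else 0) =
         lincomb {(i, j) \<in> I \<times> J. P i j} (\<lambda>(i, j). \<gamma> i j) (\<lambda>(i, j). r i j)"
proof
  fix t
  have "(\<Sum>i\<in>I. \<Sum>j\<in>J. if P i j then \<gamma> i j * bvec (r i j) t else 0)
      = (\<Sum>x\<in>I \<times> J. if case_prod P x then case_prod (\<lambda>i j. \<gamma> i j * bvec (r i j) t) x else 0)"
    unfolding sum.cartesian_product by (intro sum.cong refl) auto
  also have "\<dots> = (\<Sum>x\<in>{x\<in>I \<times> J. case_prod P x}. case_prod (\<lambda>i j. \<gamma> i j * bvec (r i j) t) x)"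
    using assms by (simp add: sum.inter_filter)
  also have "{x\<in>I \<times> J. case_prod P x} = {(i, j) \<in> I \<times> J. P i j}" by auto
  finally show "(\<Sum>i\<in>I. \<Sum>j\<in>J. if P i j then \<gamma> i j * bvec (r i j) t else 0) =
      lincomb {(i, j) \<in> I \<times> J. P i j} (\<lambda>(i, j). \<gamma> i j) (\<lambda>(i, j). r i j) t"
    unfolding lincomb_def by (simp add: case_prod_beta)
qed

lemma sum_mult_lincomb:
  assumes "finite A" "\<And>j. j \<in> A \<Longrightarrow> finite (I j)"
  shows "(\<lambda>t. \<Sum>j\<in>A. v j * lincomb (I j) (\<alpha> j) (p j) t) =
         lincomb (SIGMA j:A. I j) (\<lambda>(j, i). v j * \<alpha> j i) (\<lambda>(j, i). p j i)"
  unfolding lincomb_def using assms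
  by (intro ext) (simp add: sum.Sigma sum_distrib_left mult.assoc split_def)

lemma lincomb_antidiagonal:
  fixes n :: nat
  shows "lincomb {(i, b) \<in> {..<n} \<times> {..<n}. i + b < n} (\<lambda>(i, b). c i b) (\<lambda>(i, b). p (i + b)) =
   lincomb {..<n} (\<lambda>m. \<Sum>b\<le>m. c (m - b) b) p"
proof -
  let ?T = "{(i, b) \<in> {..<n} \<times> {..<n}. i + b < n}"
  have "finite ?T" by (rule finite_subset[of _ "{..<n} \<times> {..<n}"]) auto
  have "lincomb ?T (\<lambda>(i, b). c i b) (\<lambda>x. p (case_prod (+) x)) =
        lincomb {..<n} (\<lambda>m. \<Sum>x\<in>{x\<in>?T. case_prod (+) x = m}. case_prod c x) p"
    using \<open>finite ?T\<close> by (intro lincomb_image) auto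
  also have "\<dots> = lincomb {..<n} (\<lambda>m. \<Sum>b\<le>m. c (m - b) b) p"
  proof (rule lincomb_cong[OF refl _ refl])
    fix m assume "m \<in> {..<n}"
    then have "{x\<in>?T. case_prod (+) x = m} = (\<lambda>b. (m - b, b)) ` {..m}"
      by (auto simp: image_iff)
    moreover have "inj_on (\<lambda>b. (m - b, b)) {..m}" by (auto simp: inj_on_def)
    ultimately show "(\<Sum>x\<in>{x\<in>?T. case_prod (+) x = m}. case_prod c x) = (\<Sum>b\<le>m. c (m - b) b)"
      by (simp add: sum.reindex)
  qed
  finally show ?thesis by (simp add: split_def)
qed

lemma lincomb_triangle:
  fixes n :: nat
  shows "lincomb {(b1, b2). b1 < n \<and> b2 < n \<and> b1 + b2 < n} \<alpha> p =
   lincomb (SIGMA b:{..<n}. {..b}) (\<lambda>(b, k). \<alpha> (b - k, k)) (\<lambda>(b, k). p (b - k, k))"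
proof -
  let ?h = "\<lambda>(b, k). (b - k, k)"
  have "{(b1, b2). b1 < n \<and> b2 < n \<and> b1 + b2 < n} = ?h ` (SIGMA b:{..<n}. {..b})"
  proof (intro set_eqI iffI)
    fix x assume "x \<in> {(b1, b2). b1 < n \<and> b2 < n \<and> b1 + b2 < n}"
    then obtain b1 b2 where "x = (b1, b2)" "b1 + b2 < n" by auto
    then show "x \<in> ?h ` (SIGMA b:{..<n}. {..b})"
      by (auto intro!: image_eqI[of _ _ "(b1 + b2, b2)"])
  qed auto
  moreover have "inj_on ?h (SIGMA b:{..<n}. {..b})" by (auto simp: inj_on_def)
  ultimately show ?thesis by (simp add: lincomb_reindex split_def)
qed

lemma tens_bvec: "tens (bvec p) (bvec q) = bvec (p, q)"
  by (auto simp: tens_def bvec_def)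

lemma tens_scale_bvec: "tens (\<lambda>t. c * bvec p t) (\<lambda>t. d * bvec q t) = (\<lambda>t. c * d * bvec (p, q) t)"
  by (auto simp: tens_def bvec_def)

lemma tens_scale_left_bvec: "tens (\<lambda>t. c * bvec p t) (bvec q) = (\<lambda>t. c * bvec (p, q) t)"
  by (auto simp: tens_def bvec_def)

lemma tens_bvec_lincomb:
  "tens (bvec p) (lincomb I \<alpha> q) = lincomb I \<alpha> (\<lambda>i. (p, q i))"
  by (auto simp: tens_def lincomb_def bvec_def sum_distrib_left intro!: ext sum.cong)

section \<open>Gaussian binomials and tuple sums\<close>

text \<open>\<open>gauss_poly k s\<close> is the Gaussian binomial \<open>[k+s, k]\<^sub>q\<close>.\<close>

fun gauss_poly :: "nat \<Rightarrow> nat \<Rightarrow> 'a::comm_ring_1 poly" where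
  "gauss_poly 0 s = 1"
| "gauss_poly (Suc k) 0 = 1"
| "gauss_poly (Suc k) (Suc s) = gauss_poly k (Suc s) + monom 1 (Suc k) * gauss_poly (Suc k) s"

definition qpoch_poly :: "nat \<Rightarrow> 'a::comm_ring_1 poly" where
  "qpoch_poly k = (\<Prod>j\<in>{1..k}. 1 - monom 1 j)"

definition qpoch_shift_poly :: "nat \<Rightarrow> nat \<Rightarrow> 'a::comm_ring_1 poly" where
  "qpoch_shift_poly k s = (\<Prod>j\<in>{1..k}. 1 - monom 1 (s + j))"

lemma qpoch_poly_Suc: "qpoch_poly (Suc k) = qpoch_poly k * (1 - monom 1 (Suc k))"
  by (simp add: qpoch_poly_def prod.cl_ivl_Suc)

lemma qpoch_shift_poly_Suc:
  "qpoch_shift_poly (Suc k) s = qpoch_shift_poly k s * (1 - monom 1 (s + Suc k))"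
  by (simp add: qpoch_shift_poly_def prod.cl_ivl_Suc)

lemma qpoch_shift_poly_Suc_left:
  "qpoch_shift_poly (Suc k) s = (1 - monom 1 (Suc s)) * qpoch_shift_poly k (Suc s)"
  by (induction k) (simp_all add: qpoch_shift_poly_Suc[of "Suc _"] qpoch_shift_poly_Suc[of _ "Suc s"]
      qpoch_shift_poly_def mult.assoc)

lemma qpoch_shift_mult_qpoch_poly:
  "qpoch_shift_poly k s * qpoch_poly s = qpoch_poly (k + s)"
proof (induction k)
  case 0
  then show ?case by (simp add: qpoch_shift_poly_def)
next
  case (Suc k)
  have "qpoch_shift_poly (Suc k) s * qpoch_poly s
      = qpoch_shift_poly k s * qpoch_poly s * (1 - monom 1 (Suc (k + s)) :: 'a poly)"
    by (simp add: qpoch_shift_poly_Suc mult_ac add.commute)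
  then show ?case by (simp add: Suc.IH qpoch_poly_Suc)
qed

lemma gauss_poly_mult_qpoch_poly:
  "gauss_poly k s * qpoch_poly k = qpoch_shift_poly k s"
proof (induction k s rule: gauss_poly.induct)
  case (1 s) then show ?case by (simp add: qpoch_poly_def qpoch_shift_poly_def)
next
  case (2 k) then show ?case by (simp add: qpoch_poly_def qpoch_shift_poly_def)
next
  case (3 k s)
  have "gauss_poly (Suc k) (Suc s) * qpoch_poly (Suc k)
      = gauss_poly k (Suc s) * qpoch_poly k * (1 - monom 1 (Suc k))
        + monom 1 (Suc k) * (gauss_poly (Suc k) s * qpoch_poly (Suc k) :: 'a poly)"
    by (simp add: qpoch_poly_Suc algebra_simps)
  also have "\<dots> = qpoch_shift_poly k (Suc s) * (1 - monom 1 (Suc k))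
        + monom 1 (Suc k) * qpoch_shift_poly (Suc k) s"
    by (subst 3(1), subst 3(2), rule refl)
  also have "\<dots> = qpoch_shift_poly k (Suc s) * (1 - monom 1 (Suc k) * monom 1 (Suc s))"
    by (simp add: qpoch_shift_poly_Suc_left algebra_simps)
  also have "\<dots> = qpoch_shift_poly (Suc k) (Suc s)"
    by (simp add: qpoch_shift_poly_Suc mult_monom add.commute)
  finally show ?case .
qed

lemma qpoch_poly_nonzero: "qpoch_poly k \<noteq> (0 :: 'a::idom poly)"
proof -
  have "(1 - monom 1 j :: 'a poly) \<noteq> 0" if "j \<in> {1..k}" for j
  proof -
    have "poly (1 - monom 1 j :: 'a poly) 0 = 1" using that by (simp add: poly_monom)
    then show ?thesis by auto
  qed
  then show ?thesis
    unfolding qpoch_poly_def by (simp add: prod_zero_iff)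
qed

lemma qbinom_poly_eq_gauss_poly: "qbinom_poly k s = (gauss_poly k s :: 'a::field poly)"
proof -
  have "qbinom_poly k s = qpoch_shift_poly k s div (qpoch_poly k :: 'a poly)"
    by (simp add: qbinom_poly_def qpoch_shift_poly_def qpoch_poly_def)
  also have "\<dots> = gauss_poly k s"
    by (simp add: qpoch_poly_nonzero flip: gauss_poly_mult_qpoch_poly)
  finally show ?thesis .
qed

lemma gauss_poly_commute: "gauss_poly k s = (gauss_poly s k :: 'a::idom poly)"
proof -
  have "gauss_poly k s * (qpoch_poly k * qpoch_poly s) = qpoch_poly (k + s)"
    by (simp add: gauss_poly_mult_qpoch_poly[symmetric] qpoch_shift_mult_qpoch_poly[symmetric] mult.assoc)
  also have "\<dots> = gauss_poly s k * (qpoch_poly k * (qpoch_poly s :: 'a poly))"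
    by (simp add: gauss_poly_mult_qpoch_poly[symmetric] qpoch_shift_mult_qpoch_poly[symmetric]
        mult_ac add.commute[of k])
  finally show ?thesis by (simp add: qpoch_poly_nonzero)
qed

text \<open>\<open>qhom q j m\<close> is the complete homogeneous symmetric polynomial of degree \<open>m\<close> in
  \<open>1, q, \<dots>, q\<^sup>j\<^sup>-\<^sup>1\<close>.\<close>

primrec qhom :: "'a::comm_ring_1 \<Rightarrow> nat \<Rightarrow> nat \<Rightarrow> 'a" where
  "qhom q 0 m = (if m = 0 then 1 else 0)"
| "qhom q (Suc j) m = (\<Sum>i\<le>m. q ^ i * qhom q j i)"

lemma qhom_Suc_eq_gauss_poly: "qhom q (Suc j) m = poly (gauss_poly m j) q"
proof (induction j arbitrary: m)
  case 0
  then show ?case by (cases m) (simp_all add: if_distrib cong: if_cong)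
next
  case (Suc j)
  note IH = Suc.IH
  show ?case
  proof (induction m)
    case 0
    then show ?case using IH[of 0] by simp
  next
    case (Suc m)
    then show ?case using IH[of "Suc m"] by (simp add: poly_monom)
  qed
qed

lemma qhom_Suc_0 [simp]: "qhom q (Suc 0) m = 1"
  by (simp add: if_distrib cong: if_cong)

text \<open>\<open>triangular b = b (b - 1) / 2\<close>.\<close>

primrec triangular :: "nat \<Rightarrow> nat" where
  "triangular 0 = 0"
| "triangular (Suc b) = triangular b + b"

lemma triangular_add: "triangular (a + b) = triangular a + triangular b + a * b"
  by (induction b) auto

lemma triangular_Suc_div: "i * (i + 1) div 2 = triangular i + i"
proof -
  have "triangular (Suc i) * 2 = Suc i * i"
    by (induction i) (auto simp: algebra_simps)
  then have "i * (i + 1) = (triangular i + i) * 2" by (simp add: algebra_simps)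
  then show ?thesis by simp
qed

definition tuple_set :: "nat \<Rightarrow> nat \<Rightarrow> (nat \<Rightarrow> nat) set" where
  "tuple_set k s = {i \<in> {1..s+1} \<rightarrow>\<^sub>E {0..k}. (\<Sum>j\<in>{1..s+1}. i j) = k}"

definition tuple_weight :: "nat \<Rightarrow> (nat \<Rightarrow> nat) \<Rightarrow> nat" where
  "tuple_weight s i = (\<Sum>j\<in>{2..s+1}. i j * (j - 1))"

lemma tuple_sum_eq: "tuple_sum \<omega> k s = (\<Sum>i\<in>tuple_set k s. \<omega> ^ tuple_weight s i)"
  by (simp add: tuple_sum_def tuple_set_def tuple_weight_def)

lemma tuple_sum_0: "tuple_sum \<omega> k 0 = 1"
proof -
  have "tuple_set k 0 = {\<lambda>j. if j = 1 then k else undefined}"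
    by (auto simp: tuple_set_def PiE_iff extensional_def)
  then show ?thesis
    by (simp add: tuple_sum_eq tuple_weight_def)
qed

lemma bij_betw_tuple_set_Suc:
  "bij_betw (\<lambda>(t, i). i(s + 2 := t)) (SIGMA t:{..k}. tuple_set (k - t) s) (tuple_set k (Suc s))"
proof (rule bij_betw_byWitness[where f' = "\<lambda>f. (f (s + 2), f(s + 2 := undefined))"])
  have sum_upd: "(\<Sum>j\<in>{1..s+1}. (f(s + 2 := x)) j) = (\<Sum>j\<in>{1..s+1}. f j)" for f :: "nat \<Rightarrow> nat" and x
    by (intro sum.cong) auto
  show "\<forall>a\<in>SIGMA t:{..k}. tuple_set (k - t) s.
      (\<lambda>f. (f (s + 2), f(s + 2 := undefined))) ((\<lambda>(t, i). i(s + 2 := t)) a) = a"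
    by (auto simp: tuple_set_def PiE_iff extensional_def intro!: ext)
  show "\<forall>f\<in>tuple_set k (Suc s). (\<lambda>(t, i). i(s + 2 := t)) (f (s + 2), f(s + 2 := undefined)) = f"
    by auto
  show "(\<lambda>(t, i). i(s + 2 := t)) ` (SIGMA t:{..k}. tuple_set (k - t) s) \<subseteq> tuple_set k (Suc s)"
  proof clarify
    fix t i assume t: "t \<le> k" and "i \<in> tuple_set (k - t) s"
    then have "i \<in> {1..s+1} \<rightarrow>\<^sub>E {0..k}" "(\<Sum>j\<in>{1..s+1}. i j) + t = k"
      by (auto simp: tuple_set_def PiE_iff)
    then show "i(s + 2 := t) \<in> tuple_set k (Suc s)"
      by (auto simp: tuple_set_def PiE_iff extensional_def sum.cl_ivl_Suc sum_upd)
  qed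
  show "(\<lambda>f. (f (s + 2), f(s + 2 := undefined))) ` tuple_set k (Suc s)
      \<subseteq> (SIGMA t:{..k}. tuple_set (k - t) s)"
  proof (rule image_subsetI)
    fix f assume f: "f \<in> tuple_set k (Suc s)"
    then have split: "(\<Sum>j\<in>{1..s+1}. f j) + f (s + 2) = k"
      by (simp add: tuple_set_def sum.cl_ivl_Suc)
    have "f j \<le> (\<Sum>j\<in>{1..s+1}. f j)" if "j \<in> {1..s+1}" for j
      using that by (intro member_le_sum) auto
    then show "(f (s + 2), f(s + 2 := undefined)) \<in> (SIGMA t:{..k}. tuple_set (k - t) s)"
      using f split by (auto simp: tuple_set_def PiE_iff extensional_def sum_upd)
  qed
qed

lemma tuple_weight_upd:
  "tuple_weight (Suc s) (i(Suc (Suc s) := t)) = tuple_weight s i + Suc s * t"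
proof -
  have "tuple_weight (Suc s) (i(Suc (Suc s) := t)) =
      (\<Sum>j\<in>{2..s+1}. (i(Suc (Suc s) := t)) j * (j - 1)) + t * Suc s"
    by (simp add: tuple_weight_def sum.cl_ivl_Suc)
  also have "(\<Sum>j\<in>{2..s+1}. (i(Suc (Suc s) := t)) j * (j - 1)) = tuple_weight s i"
    unfolding tuple_weight_def by (intro sum.cong) auto
  also have "t * Suc s = Suc s * t" by simp
  finally show ?thesis .
qed

lemma tuple_sum_Suc:
  "tuple_sum \<omega> k (Suc s) = (\<Sum>t\<le>k. \<omega> ^ (Suc s * t) * tuple_sum \<omega> (k - t) s)"
proof -
  have fin: "finite (tuple_set m s)" for m
    unfolding tuple_set_def by (rule finite_subset[of _ "{1..s+1} \<rightarrow>\<^sub>E {0..m}"]) (auto intro: finite_PiE)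
  have "tuple_sum \<omega> k (Suc s) =
      (\<Sum>(t, i)\<in>(SIGMA t:{..k}. tuple_set (k - t) s). \<omega> ^ tuple_weight (Suc s) (i(s + 2 := t)))"
    unfolding tuple_sum_eq sum.reindex_bij_betw[OF bij_betw_tuple_set_Suc, symmetric]
    by (simp add: case_prod_beta)
  also have "\<dots> = (\<Sum>(t, i)\<in>(SIGMA t:{..k}. tuple_set (k - t) s). \<omega> ^ (Suc s * t) * \<omega> ^ tuple_weight s i)"
    by (intro sum.cong refl) (auto simp: tuple_weight_upd power_add)
  also have "\<dots> = (\<Sum>t\<le>k. \<Sum>i\<in>tuple_set (k - t) s. \<omega> ^ (Suc s * t) * \<omega> ^ tuple_weight s i)"
    using fin by (simp add: sum.Sigma)
  finally show ?thesis
    by (simp add: tuple_sum_eq sum_distrib_left)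
qed

locale taft_setting =
  fixes n :: nat and \<omega> :: "'k::field"
  assumes two_le_n: "2 \<le> n" and primitive: "primitive_root n \<omega>"
begin

lemma n_pos: "0 < n"
  using two_le_n by simp

lemma omega_pow_n: "\<omega> ^ n = 1"
  using primitive by (simp add: primitive_root_def)

lemma omega_pow_neq_1: "0 < m \<Longrightarrow> m < n \<Longrightarrow> \<omega> ^ m \<noteq> 1"
  using primitive by (simp add: primitive_root_def)

lemma omega_pow_mod: "\<omega> ^ m = \<omega> ^ (m mod n)"
proof -
  have "\<omega> ^ m = \<omega> ^ (n * (m div n)) * \<omega> ^ (m mod n)"
    by (simp add: power_add[symmetric])
  then show ?thesis by (simp add: power_mult omega_pow_n)
qed

lemma omega_pow_eq_if_dvd: "int n dvd (int a - int b) \<Longrightarrow> \<omega> ^ a = \<omega> ^ b"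
  by (subst (1 2) omega_pow_mod) (simp flip: mod_eq_dvd_iff zmod_int)

definition qbinom :: "nat \<Rightarrow> nat \<Rightarrow> 'k" where
  "qbinom k s = poly (gauss_poly k s) \<omega>"

definition qpoch :: "nat \<Rightarrow> 'k" where
  "qpoch k = (\<Prod>j\<in>{1..k}. 1 - \<omega> ^ j)"

definition qpoch_shift :: "nat \<Rightarrow> nat \<Rightarrow> 'k" where
  "qpoch_shift k s = (\<Prod>j\<in>{1..k}. 1 - \<omega> ^ (s + j))"

lemma qbinom_mult_qpoch: "qbinom k s * qpoch k = qpoch_shift k s"
  using arg_cong[OF gauss_poly_mult_qpoch_poly[of k s], of "\<lambda>p. poly p \<omega>"]
  by (simp add: qbinom_def qpoch_def qpoch_shift_def qpoch_poly_def qpoch_shift_poly_def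
      poly_prod poly_monom)

lemma qpoch_shift_mult_qpoch: "qpoch_shift k s * qpoch s = qpoch (k + s)"
  using arg_cong[OF qpoch_shift_mult_qpoch_poly[of k s], of "\<lambda>p. poly p \<omega>"]
  by (simp add: qpoch_def qpoch_shift_def qpoch_poly_def qpoch_shift_poly_def poly_prod poly_monom)

lemma qbinom_mult_qpoch_qpoch: "qbinom k s * qpoch k * qpoch s = qpoch (k + s)"
  by (simp add: qbinom_mult_qpoch qpoch_shift_mult_qpoch)

lemma qpoch_nonzero: "k < n \<Longrightarrow> qpoch k \<noteq> 0"
  unfolding qpoch_def using omega_pow_neq_1 by (auto simp: prod_zero_iff)

lemma qpoch_eq_0: "n \<le> k \<Longrightarrow> qpoch k = 0"
  unfolding qpoch_def using n_pos omega_pow_n by (auto simp: prod_zero_iff intro!: bexI[of _ n])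

lemma qbinom_0_left [simp]: "qbinom 0 s = 1"
  by (simp add: qbinom_def)

lemma qbinom_0_right [simp]: "qbinom k 0 = 1"
  by (cases k) (simp_all add: qbinom_def)

lemma qbinom_Suc_Suc: "qbinom (Suc k) (Suc s) = qbinom k (Suc s) + \<omega> ^ Suc k * qbinom (Suc k) s"
  by (simp add: qbinom_def poly_monom)

lemma qbinom_commute: "qbinom k s = qbinom s k"
  unfolding qbinom_def by (simp add: gauss_poly_commute[of k s])

lemma qhom_eq_qbinom: "qhom \<omega> (Suc j) m = qbinom m j"
  unfolding qbinom_def by (rule qhom_Suc_eq_gauss_poly)

lemma qbinom_period: "k < n \<Longrightarrow> qbinom k (s + n) = qbinom k s"
proof -
  assume "k < n"
  have "qpoch_shift k (s + n) = qpoch_shift k s"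
    unfolding qpoch_shift_def by (intro prod.cong refl) (simp add: power_add omega_pow_n)
  then show ?thesis
    using qbinom_mult_qpoch[of k "s + n"] qbinom_mult_qpoch[of k s] qpoch_nonzero[OF \<open>k < n\<close>]
    by (metis mult_right_cancel)
qed

text \<open>The factor \<open>1 - \<omega>\<^sup>n\<close> occurs in the numerator of \<open>[k+s, k]\<^sub>\<omega>\<close> but not in its
  denominator.\<close>

lemma qbinom_vanish:
  assumes "k < n" "s < n" "n \<le> k + s"
  shows "qbinom k s = 0"
proof -
  have "n - s \<in> {1..k}" "1 - \<omega> ^ (s + (n - s)) = 0"
    using assms omega_pow_n by auto
  then have "qpoch_shift k s = 0"
    unfolding qpoch_shift_def by (intro prod_zero) (auto intro!: bexI[of _ "n - s"])
  then show ?thesis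
    using qbinom_mult_qpoch[of k s] qpoch_nonzero[OF assms(1)] by simp
qed

lemma qbinom_Suc_right: "qbinom k (Suc s) = (\<Sum>t\<le>k. \<omega> ^ (Suc s * t) * qbinom (k - t) s)"
proof (induction k)
  case 0
  then show ?case by simp
next
  case (Suc k)
  have "qbinom (Suc k) (Suc s) = qbinom (Suc k) s + \<omega> ^ Suc s * qbinom k (Suc s)"
    by (metis qbinom_commute qbinom_Suc_Suc)
  also have "\<dots> = qbinom (Suc k) s + (\<Sum>t\<le>k. \<omega> ^ (Suc s * Suc t) * qbinom (k - t) s)"
    by (simp add: Suc sum_distrib_left power_add mult.assoc)
  also have "\<dots> = (\<Sum>t\<le>Suc k. \<omega> ^ (Suc s * t) * qbinom (Suc k - t) s)"
    by (subst sum.atMost_Suc_shift) simp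
  finally show ?case .
qed

lemma tuple_sum_eq_qbinom: "tuple_sum \<omega> k s = qbinom k s"
  by (induction s arbitrary: k) (simp_all add: tuple_sum_0 tuple_sum_Suc qbinom_Suc_right)

lemma tuple_sum_identity:
  "\<forall>k s. k \<le> n - 1 \<and> s \<le> n - 1 \<longrightarrow>
     tuple_sum \<omega> k s = (if k + s < n then poly (qbinom_poly k s) \<omega> else 0)"
proof (intro allI impI)
  fix k s assume "k \<le> n - 1 \<and> s \<le> n - 1"
  then have "k < n" "s < n" using n_pos by auto
  then show "tuple_sum \<omega> k s = (if k + s < n then poly (qbinom_poly k s) \<omega> else 0)"
    by (simp add: tuple_sum_eq_qbinom qbinom_poly_eq_gauss_poly qbinom_def qbinom_vanish[unfolded qbinom_def])
qed

lemma qbinom_pascal_sum: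
  "(\<Sum>k\<le>Suc b. qbinom k (Suc b - k) * e k) =
   (\<Sum>k\<le>b. qbinom k (b - k) * \<omega> ^ k * e k) + (\<Sum>k\<le>b. qbinom k (b - k) * e (Suc k))"
proof -
  have "(\<Sum>k\<le>b. qbinom (Suc k) (b - k) * e (Suc k)) =
      (\<Sum>k\<le>b. qbinom k (b - k) * e (Suc k)) +
      (\<Sum>k\<le>b. if k < b then \<omega> ^ Suc k * qbinom (Suc k) (b - Suc k) * e (Suc k) else 0)"
    unfolding sum.distrib[symmetric]
  proof (intro sum.cong refl)
    fix k assume "k \<in> {..b}"
    then consider "k < b" "b - k = Suc (b - Suc k)" | "b - k = 0" by fastforce
    then show "qbinom (Suc k) (b - k) * e (Suc k) = qbinom k (b - k) * e (Suc k) +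
        (if k < b then \<omega> ^ Suc k * qbinom (Suc k) (b - Suc k) * e (Suc k) else 0)"
      by cases (simp_all add: qbinom_Suc_Suc algebra_simps)
  qed
  also have "(\<Sum>k\<le>b. if k < b then \<omega> ^ Suc k * qbinom (Suc k) (b - Suc k) * e (Suc k) else 0) =
      (\<Sum>k<b. qbinom (Suc k) (b - Suc k) * \<omega> ^ Suc k * e (Suc k))"
    by (simp add: sum.If_cases mult_ac) (rule sum.cong, auto)
  finally have "(\<Sum>k\<le>b. qbinom (Suc k) (b - k) * e (Suc k)) =
      (\<Sum>k\<le>b. qbinom k (b - k) * e (Suc k)) +
      (\<Sum>k<b. qbinom (Suc k) (b - Suc k) * \<omega> ^ Suc k * e (Suc k))" .
  moreover have "(\<Sum>k\<le>b. qbinom k (b - k) * \<omega> ^ k * e k) =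
      e 0 + (\<Sum>k<b. qbinom (Suc k) (b - Suc k) * \<omega> ^ Suc k * e (Suc k))"
    unfolding lessThan_Suc_atMost[symmetric] sum.lessThan_Suc_shift by (simp add: mult_ac)
  ultimately show ?thesis
    unfolding sum.atMost_Suc_shift by (simp add: algebra_simps)
qed

lemma qhom_mod:
  assumes "b < n" "0 < L" "L < 2 * n"
  shows "qhom \<omega> (L mod n) b = qhom \<omega> L b"
proof -
  obtain M where L: "L = Suc M" using assms by (cases L) auto
  consider "L < n" | "L = n" | "n < L" by linarith
  then show ?thesis
  proof cases
    case 1
    then show ?thesis by simp
  next
    case 2
    then have "M = n - 1" using L by simp
    then have "qhom \<omega> L b = qbinom b (n - 1)"
      using L qhom_eq_qbinom[of M b] by (simp del: qhom.simps)
    also have "\<dots> = (if b = 0 then 1 else 0)"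
      using assms(1) n_pos by (auto intro: qbinom_vanish)
    finally show ?thesis using 2 by simp
  next
    case 3
    moreover have "L - n < n" using assms by linarith
    ultimately have "L mod n = Suc (L - n - 1)" "L = Suc (L - n - 1 + n)"
      by (simp_all add: mod_if)
    then have "qhom \<omega> (L mod n) b = qbinom b (L - n - 1) \<and> qhom \<omega> L b = qbinom b (L - n - 1 + n)"
      by (metis qhom_eq_qbinom)
    then show ?thesis
      using qbinom_period[OF assms(1)] by simp
  qed
qed

text \<open>Clearing the nonzero denominators \<open>(\<omega>;\<omega>)\<^bsub>b1\<^esub> (\<omega>;\<omega>)\<^bsub>b2\<^esub> (\<omega>;\<omega>)\<^bsub>j-1\<^esub>\<close>, both
  sides become \<open>(\<omega>;\<omega>)\<^bsub>b1+b2+j-1\<^esub>\<close>, which vanishes when \<open>b1 + b2 \<ge> n\<close>.\<close>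

lemma qhom_mult:
  assumes "j < n" "b1 < n" "b2 < n"
  shows "qhom \<omega> j b1 * qhom \<omega> ((b1 + j) mod n) b2 =
    (if b1 + b2 < n then qhom \<omega> j (b1 + b2) * qbinom b2 b1 else 0)"
proof (cases j)
  case 0
  then show ?thesis using assms by (cases "b1 = 0") auto
next
  case (Suc j')
  have "qhom \<omega> ((b1 + j) mod n) b2 = qhom \<omega> (b1 + j) b2"
    using assms Suc by (intro qhom_mod) auto
  then have "qhom \<omega> j b1 * qhom \<omega> ((b1 + j) mod n) b2 * (qpoch b1 * qpoch b2 * qpoch j')
      = qbinom b2 (b1 + j') * qpoch b2 * (qbinom b1 j' * qpoch b1 * qpoch j')"
    using Suc by (simp add: qhom_eq_qbinom mult_ac del: qhom.simps)
  also have "\<dots> = qpoch (b1 + b2 + j')"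
    by (simp add: qbinom_mult_qpoch_qpoch add_ac)
  finally have lhs: "qhom \<omega> j b1 * qhom \<omega> ((b1 + j) mod n) b2 * (qpoch b1 * qpoch b2 * qpoch j')
      = qpoch (b1 + b2 + j')" .
  have nonzero: "qpoch b1 * qpoch b2 * qpoch j' \<noteq> 0"
    using qpoch_nonzero assms Suc by simp
  show ?thesis
  proof (cases "b1 + b2 < n")
    case True
    have "qhom \<omega> j (b1 + b2) * qbinom b2 b1 * (qpoch b1 * qpoch b2 * qpoch j')
        = qbinom (b1 + b2) j' * (qbinom b2 b1 * qpoch b2 * qpoch b1) * qpoch j'"
      using Suc by (simp add: qhom_eq_qbinom mult_ac del: qhom.simps)
    also have "\<dots> = qpoch (b1 + b2 + j')"
      by (simp add: qbinom_mult_qpoch_qpoch add.commute)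
    finally show ?thesis
      using lhs nonzero True by (metis mult_right_cancel)
  next
    case False
    then show ?thesis using lhs nonzero qpoch_eq_0[of "b1 + b2 + j'"] by simp
  qed
qed

section \<open>The powers of \<open>\<rho>(u)\<close>\<close>

lemmas basis_defs = taft_basis_def A_basis_def HA_basis_def HH_basis_def

lemma taft_pow_g: "taft_pow n \<omega> (taft_g n) a = bvec (a mod n, 0)"
proof (induction a)
  case 0
  then show ?case by (simp add: taft_pow_def powv_def taft_one_def)
next
  case (Suc a)
  have "taft_pow n \<omega> (taft_g n) (Suc a) =
      mulv (taft_basis n) (taft_mult n \<omega>) (bvec (1, 0)) (bvec (a mod n, 0))"
    using Suc two_le_n by (simp add: taft_pow_def powv_def taft_g_def)
  also have "\<dots> = bvec (Suc a mod n, 0)"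
    using two_le_n by (simp add: mulv_bvec basis_defs taft_mult_def mod_Suc_eq)
  finally show ?case .
qed

lemma taft_pow_x: "i < n \<Longrightarrow> taft_pow n \<omega> taft_x i = bvec (0, i)"
proof (induction i)
  case 0
  then show ?case by (simp add: taft_pow_def powv_def taft_one_def)
next
  case (Suc i)
  have "taft_pow n \<omega> taft_x (Suc i) = mulv (taft_basis n) (taft_mult n \<omega>) (bvec (0, 1)) (bvec (0, i))"
    using Suc by (simp add: taft_pow_def powv_def taft_x_def)
  also have "\<dots> = bvec (0, Suc i)"
    using Suc two_le_n by (simp add: mulv_bvec basis_defs taft_mult_def)
  finally show ?case .
qed

lemma A_pow_u: "A_pow n \<omega> A_u k = (\<lambda>t. \<omega> ^ (k div n) * bvec (k mod n) t)"
proof (induction k)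
  case 0
  then show ?case by (simp add: A_pow_def powv_def A_one_def)
next
  case (Suc k)
  have "A_pow n \<omega> A_u (Suc k) =
      mulv (A_basis n) (A_mult n \<omega>) (lincomb {()} (\<lambda>_. 1) (\<lambda>_. 1))
        (lincomb {()} (\<lambda>_. \<omega> ^ (k div n)) (\<lambda>_. k mod n))"
    using Suc by (simp add: A_pow_def powv_def A_u_def lincomb_def)
  also have "\<dots> = (\<lambda>t. \<omega> ^ (k div n) * A_mult n \<omega> 1 (k mod n) t)"
    using two_le_n by (subst mulv_lincomb) (auto simp: A_basis_def)
  also have "\<dots> = (\<lambda>t. \<omega> ^ (Suc k div n) * bvec (Suc k mod n) t)"
    using mod_less_divisor[OF n_pos, of k]
    by (cases "Suc (k mod n) = n") (auto simp: A_mult_def mod_Suc div_Suc intro!: ext)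
  finally show ?case .
qed

lemma HA_mult_basis:
  assumes "l1 < n" "l2 < n"
  shows "HA_mult n \<omega> ((a1, b1), l1) ((a2, b2), l2) =
    (\<lambda>t. if b1 + b2 < n
         then \<omega> ^ (b1 * a2) * \<omega> ^ ((l1 + l2) div n) *
              bvec (((a1 + a2) mod n, b1 + b2), (l1 + l2) mod n) t
         else 0)"
proof -
  have A: "A_mult n \<omega> l1 l2 = (\<lambda>t. \<omega> ^ ((l1 + l2) div n) * bvec ((l1 + l2) mod n) t)"
    using assms by (cases "l1 + l2 < n") (simp_all add: A_mult_def div_if mod_if)
  show ?thesis
    unfolding HA_mult_def tmul_def by (auto simp: taft_mult_def tens_def bvec_def A)
qed

lemma HA_pow_Suc: "HA_pow n \<omega> v (Suc j) = mulv (HA_basis n) (HA_mult n \<omega>) v (HA_pow n \<omega> v j)"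
  by (simp add: HA_pow_def powv_def)

text \<open>The exponent of \<open>g\<close> in the \<open>b\<close>-th term of \<open>\<rho>(u)\<^sup>j\<close>: the residue of \<open>-(b + j)\<close>
  mod \<open>n\<close>.\<close>

definition gexp :: "nat \<Rightarrow> nat \<Rightarrow> nat" where
  "gexp j b = (n - (b + j) mod n) mod n"

lemma gexp_less: "gexp j b < n"
  using n_pos by (simp add: gexp_def)

lemma gexp_int: "\<exists>q. int (gexp j b) = int n * q - int (b + j)"
proof -
  define r where "r = (b + j) mod n"
  define d where "d = (b + j) div n"
  have bj: "b + j = n * d + r" by (simp add: r_def d_def)
  have "r < n" using n_pos by (simp add: r_def)
  show ?thesis
  proof (cases "r = 0")
    case True
    then show ?thesis using bj by (intro exI[of _ "int d"]) (simp add: gexp_def r_def[symmetric])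
  next
    case False
    then have "int (gexp j b) = int n * (int d + 1) - int (b + j)"
      using \<open>r < n\<close> bj by (simp add: gexp_def r_def[symmetric] of_nat_diff algebra_simps)
    then show ?thesis by blast
  qed
qed

lemma gexp_unique:
  assumes "x < n" "int n dvd (int x + int (b + j))"
  shows "gexp j b = x"
proof -
  obtain q where "int (gexp j b) = int n * q - int (b + j)" using gexp_int by blast
  moreover obtain r where "int x + int (b + j) = int n * r" using assms(2) by (auto elim: dvdE)
  ultimately have "int x - int (gexp j b) = int n * (r - q)" by (simp add: algebra_simps)
  then have "int n dvd (int x - int (gexp j b))" by simp
  moreover have "\<bar>int x - int (gexp j b)\<bar> < int n" using assms(1) gexp_less[of j b] by linarith
  ultimately have "int x - int (gexp j b) = 0"
    using dvd_imp_le_int[of "int x - int (gexp j b)" "int n"] by (cases "int x - int (gexp j b) = 0") auto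
  then show ?thesis by simp
qed

lemma gexp_1: "i < n \<Longrightarrow> gexp (Suc 0) i = n - (i + 1)"
  by (cases "i + 1 = n") (auto simp: gexp_def)

lemma gexp_add_mod: "int n dvd int ((x + gexp j b) mod n) + int (b + j) - int x"
proof -
  define X where "X = x + gexp j b"
  obtain q where q: "int (gexp j b) = int n * q - int (b + j)" using gexp_int by blast
  have "int X = int n * int (X div n) + int (X mod n)"
    by (simp only: of_nat_mult[symmetric] of_nat_add[symmetric] mult_div_mod_eq)
  then have "int (X mod n) + int (b + j) - int x = int n * (q - int (X div n))"
    using q by (simp add: X_def algebra_simps)
  then show ?thesis unfolding X_def by (rule dvdI)
qed

lemma gexp_Suc:
  assumes "i < n"
  shows "(n - (i + 1) + gexp j b) mod n = gexp (Suc j) (i + b)"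
proof (rule gexp_unique[symmetric])
  show "(n - (i + 1) + gexp j b) mod n < n" using n_pos by simp
  have "int n dvd int ((n - (i + 1) + gexp j b) mod n) + int (b + j) - int (n - (i + 1)) + int n"
    using gexp_add_mod by (rule dvd_add) simp
  then show "int n dvd int ((n - (i + 1) + gexp j b) mod n) + int (i + b + Suc j)"
    using assms by (simp add: of_nat_diff algebra_simps)
qed

lemma gexp_shift: "gexp j b1 = (gexp j (b1 + b2) + b2) mod n"
proof (rule gexp_unique)
  show "(gexp j (b1 + b2) + b2) mod n < n" using n_pos by simp
  have "int n dvd int ((b2 + gexp j (b1 + b2)) mod n) + int (b1 + b2 + j) - int b2"
    by (rule gexp_add_mod)
  then show "int n dvd int ((gexp j (b1 + b2) + b2) mod n) + int (b1 + j)"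
    by (simp add: algebra_simps)
qed

lemma gexp_mod_left: "gexp ((b1 + j) mod n) b2 = gexp j (b1 + b2)"
  unfolding gexp_def by (simp add: mod_add_right_eq add_ac)

definition wexp :: "nat \<Rightarrow> nat \<Rightarrow> nat" where
  "wexp j b = triangular b + b * gexp j b + (b + j) div n"

definition rho_scalar :: "nat \<Rightarrow> nat \<Rightarrow> 'k" where
  "rho_scalar j b = ((\<omega> - 1) * \<omega>) ^ b * \<omega> ^ wexp j b"

definition rho_coeff :: "nat \<Rightarrow> nat \<Rightarrow> 'k" where
  "rho_coeff j b = qhom \<omega> j b * rho_scalar j b"

definition rho_index :: "nat \<Rightarrow> nat \<Rightarrow> (nat \<times> nat) \<times> nat" where
  "rho_index j b = ((gexp j b, b), (b + j) mod n)"

text \<open>Exponents of \<open>\<omega>\<close> matter only modulo \<open>n\<close>, so the next two identities are checked in \<open>\<int>\<close>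
  using the representatives provided by \<open>gexp_int\<close>.\<close>

lemma rho_scalar_mult:
  assumes "b2 < n"
  shows "rho_scalar j b1 * rho_scalar ((b1 + j) mod n) b2 = rho_scalar j (b1 + b2)"
proof -
  define l where "l = (b1 + j) mod n"
  define D where "D = (b1 + j) div n"
  have lD: "int l = int (b1 + j) - int n * int D" unfolding l_def D_def
    by (metis add_diff_cancel_left' div_mult_mod_eq mult.commute of_nat_add of_nat_mult)
  obtain q1 where q1: "int (gexp j b1) = int n * q1 - int (b1 + j)" using gexp_int by blast
  obtain q2 where q2: "int (gexp l b2) = int n * q2 - int (b2 + l)" using gexp_int by blast
  obtain q3 where q3: "int (gexp j (b1 + b2)) = int n * q3 - int (b1 + b2 + j)" using gexp_int by blast
  have "(b1 + j) div n + (b2 + l) div n = (b1 + b2 + j) div n"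
    using div_add1_eq[of "b1 + j" b2 n] assms by (simp add: l_def add_ac)
  then have "int (wexp j b1 + wexp l b2) - int (wexp j (b1 + b2))
      = int (gexp j b1) * int b1 + int (gexp l b2) * int b2
        - int (gexp j (b1 + b2)) * (int b1 + int b2) - int b1 * int b2"
    unfolding wexp_def by (simp add: triangular_add algebra_simps)
  also have "\<dots> = int n * (q1 * int b1 + q2 * int b2 + int D * int b2 - q3 * (int b1 + int b2))"
    unfolding q1 q2 q3 by (simp add: algebra_simps lD)
  finally have "\<omega> ^ (wexp j b1 + wexp l b2) = \<omega> ^ wexp j (b1 + b2)"
    by (intro omega_pow_eq_if_dvd) simp
  then show ?thesis unfolding rho_scalar_def l_def[symmetric]
    by (simp add: power_add algebra_simps)
qed

lemma rho_scalar_Suc: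
  "rho_scalar (Suc 0) i * rho_scalar j b * \<omega> ^ (i * gexp j b) * \<omega> ^ (((i + 1) mod n + (b + j) mod n) div n)
   = \<omega> ^ b * rho_scalar (Suc j) (i + b)"
proof -
  let ?e = "((i + 1) mod n + (b + j) mod n) div n"
  obtain q1 where q1: "int (gexp (Suc 0) i) = int n * q1 - int (i + Suc 0)" using gexp_int by blast
  obtain q2 where q2: "int (gexp j b) = int n * q2 - int (b + j)" using gexp_int by blast
  obtain q3 where q3: "int (gexp (Suc j) (i + b)) = int n * q3 - int (i + b + Suc j)" using gexp_int by blast
  have "(i + 1) div n + (b + j) div n + ?e = (i + b + Suc j) div n"
    using div_add1_eq[of "i + 1" "b + j" n] by (simp add: add_ac)
  then have "int (wexp (Suc 0) i + wexp j b + i * gexp j b + ?e) - int (b + wexp (Suc j) (i + b))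
      = int (gexp (Suc 0) i) * int i + int (gexp j b) * int b + int i * int (gexp j b)
        - int b - int i * int b - int (gexp (Suc j) (i + b)) * (int i + int b)"
    unfolding wexp_def by (simp add: triangular_add algebra_simps)
  also have "\<dots> = int n * (q1 * int i + q2 * int b + q2 * int i - q3 * (int i + int b))"
    unfolding q1 q2 q3 by (simp add: algebra_simps)
  finally have "\<omega> ^ (wexp (Suc 0) i + wexp j b + i * gexp j b + ?e) = \<omega> ^ (b + wexp (Suc j) (i + b))"
    by (intro omega_pow_eq_if_dvd) simp
  then show ?thesis unfolding rho_scalar_def by (simp add: power_add algebra_simps)
qed

lemma rho_u_eq_lincomb:
  "rho_u n \<omega> = lincomb {..<n} (rho_coeff (Suc 0)) (\<lambda>i. ((n - (i + 1), i), (i + 1) mod n))"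
  unfolding rho_u_def lincomb_def
proof (intro ext sum.cong refl)
  fix t i assume "i \<in> {..<n}"
  then have i: "i < n" by simp
  have "mulv (taft_basis n) (taft_mult n \<omega>) (taft_pow n \<omega> taft_x i) (taft_pow n \<omega> (taft_g n) (n - (i + 1)))
      = taft_mult n \<omega> (0, i) (n - (i + 1), 0)"
    using i by (simp add: taft_pow_x taft_pow_g mulv_bvec basis_defs)
  then have "tens (mulv (taft_basis n) (taft_mult n \<omega>) (taft_pow n \<omega> taft_x i)
      (taft_pow n \<omega> (taft_g n) (n - (i + 1)))) (A_pow n \<omega> A_u (i + 1)) t =
      \<omega> ^ (i * (n - (i + 1))) * \<omega> ^ ((i + 1) div n) * bvec ((n - (i + 1), i), (i + 1) mod n) t"
    using i by (cases t) (auto simp: A_pow_u taft_mult_def tens_def bvec_def)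
  moreover have "coeff_a \<omega> i * \<omega> ^ (i * (n - (i + 1))) * \<omega> ^ ((i + 1) div n) = rho_coeff (Suc 0) i"
  proof -
    have "coeff_a \<omega> i = (\<omega> - 1) ^ i * \<omega> ^ (triangular i + i)"
      unfolding coeff_a_def triangular_Suc_div ..
    then show ?thesis
      using i by (simp add: rho_coeff_def rho_scalar_def wexp_def gexp_1 power_add
          power_mult_distrib mult_ac del: qhom.simps)
  qed
  ultimately show "coeff_a \<omega> i * tens (mulv (taft_basis n) (taft_mult n \<omega>) (taft_pow n \<omega> taft_x i)
      (taft_pow n \<omega> (taft_g n) (n - (i + 1)))) (A_pow n \<omega> A_u (i + 1)) t =
      rho_coeff (Suc 0) i * bvec ((n - (i + 1), i), (i + 1) mod n) t"
    by (simp add: mult.assoc)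
qed

lemma rho_coeff_Suc:
  "rho_coeff (Suc j) m = (\<Sum>b\<le>m. rho_coeff (Suc 0) (m - b) * rho_coeff j b *
     \<omega> ^ ((m - b) * gexp j b) * \<omega> ^ (((m - b + 1) mod n + (b + j) mod n) div n))"
proof -
  have "(\<Sum>b\<le>m. rho_coeff (Suc 0) (m - b) * rho_coeff j b *
       \<omega> ^ ((m - b) * gexp j b) * \<omega> ^ (((m - b + 1) mod n + (b + j) mod n) div n))
      = (\<Sum>b\<le>m. qhom \<omega> j b * (rho_scalar (Suc 0) (m - b) * rho_scalar j b *
       \<omega> ^ ((m - b) * gexp j b) * \<omega> ^ (((m - b + 1) mod n + (b + j) mod n) div n)))"
    unfolding rho_coeff_def by (simp del: qhom.simps add: algebra_simps)
  also have "\<dots> = (\<Sum>b\<le>m. qhom \<omega> j b * (\<omega> ^ b * rho_scalar (Suc j) m))"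
  proof (intro sum.cong refl)
    fix b assume "b \<in> {..m}"
    then have "m - b + b = m" by simp
    then show "qhom \<omega> j b * (rho_scalar (Suc 0) (m - b) * rho_scalar j b * \<omega> ^ ((m - b) * gexp j b) *
        \<omega> ^ (((m - b + 1) mod n + (b + j) mod n) div n)) = qhom \<omega> j b * (\<omega> ^ b * rho_scalar (Suc j) m)"
      by (simp only: rho_scalar_Suc)
  qed
  also have "\<dots> = rho_coeff (Suc j) m"
    unfolding rho_coeff_def by (simp add: sum_distrib_left sum_distrib_right mult_ac)
  finally show ?thesis ..
qed

lemma rho_u_mult_rho_index:
  assumes "i < n"
  shows "HA_mult n \<omega> ((n - (i + 1), i), (i + 1) mod n) (rho_index j b) =
    (\<lambda>t. if i + b < n
         then \<omega> ^ (i * gexp j b) * \<omega> ^ (((i + 1) mod n + (b + j) mod n) div n) *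
              bvec (rho_index (Suc j) (i + b)) t
         else 0)"
proof -
  have "(((n - (i + 1) + gexp j b) mod n, i + b), ((i + 1) mod n + (b + j) mod n) mod n)
      = rho_index (Suc j) (i + b)"
    unfolding rho_index_def gexp_Suc[OF assms] by (simp add: mod_add_eq add_ac)
  moreover have "(i + 1) mod n < n" "(b + j) mod n < n" using n_pos by auto
  ultimately show ?thesis
    by (simp only: rho_index_def[of j b] HA_mult_basis)
qed

lemma rho_u_power: "HA_pow n \<omega> (rho_u n \<omega>) j = lincomb {..<n} (rho_coeff j) (rho_index j)"
proof (induction j)
  case 0
  have "lincomb {..<n} (rho_coeff 0) (rho_index 0) = lincomb {0} (rho_coeff 0) (rho_index 0)"
    using n_pos by (intro lincomb_mono_neutral[symmetric]) (auto simp: rho_coeff_def)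
  also have "\<dots> = bvec ((0, 0), 0)"
    by (simp add: lincomb_def rho_coeff_def rho_scalar_def wexp_def rho_index_def gexp_def)
  finally show ?case by (simp add: HA_pow_def powv_def taft_one_def A_one_def tens_bvec)
next
  case (Suc j)
  let ?c = "\<lambda>i b. rho_coeff (Suc 0) i * rho_coeff j b *
    (\<omega> ^ (i * gexp j b) * \<omega> ^ (((i + 1) mod n + (b + j) mod n) div n))"
  have "HA_pow n \<omega> (rho_u n \<omega>) (Suc j) = (\<lambda>t. \<Sum>i<n. \<Sum>b<n. rho_coeff (Suc 0) i * rho_coeff j b *
      HA_mult n \<omega> ((n - (i + 1), i), (i + 1) mod n) (rho_index j b) t)"
    unfolding HA_pow_Suc Suc.IH unfolding rho_u_eq_lincomb using n_pos
    by (intro mulv_lincomb) (auto simp: rho_index_def gexp_less basis_defs)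
  also have "\<dots> = (\<lambda>t. \<Sum>i<n. \<Sum>b<n. if i + b < n then ?c i b * bvec (rho_index (Suc j) (i + b)) t else 0)"
  proof (intro ext sum.cong refl)
    fix t i b assume "i \<in> {..<n}"
    then have "i < n" by simp
    show "rho_coeff (Suc 0) i * rho_coeff j b * HA_mult n \<omega> ((n - (i + 1), i), (i + 1) mod n) (rho_index j b) t
        = (if i + b < n then ?c i b * bvec (rho_index (Suc j) (i + b)) t else 0)"
      unfolding rho_u_mult_rho_index[OF \<open>i < n\<close>] by (simp add: mult.assoc)
  qed
  also have "\<dots> = lincomb {(i, b) \<in> {..<n} \<times> {..<n}. i + b < n} (\<lambda>(i, b). ?c i b)
      (\<lambda>(i, b). rho_index (Suc j) (i + b))"
    by (rule lincomb_if) auto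
  also have "\<dots> = lincomb {..<n} (rho_coeff (Suc j)) (rho_index (Suc j))"
    unfolding lincomb_antidiagonal by (intro lincomb_cong refl) (simp only: rho_coeff_Suc[of j] mult.assoc)
  finally show ?case .
qed

lemma rho_coeff_mult:
  assumes "j < n" "b1 < n" "b2 < n"
  shows "rho_coeff j b1 * rho_coeff ((b1 + j) mod n) b2 =
    (if b1 + b2 < n then rho_coeff j (b1 + b2) * qbinom b2 b1 else 0)"
proof -
  have "rho_coeff j b1 * rho_coeff ((b1 + j) mod n) b2 =
      (qhom \<omega> j b1 * qhom \<omega> ((b1 + j) mod n) b2) * (rho_scalar j b1 * rho_scalar ((b1 + j) mod n) b2)"
    unfolding rho_coeff_def by (simp add: ac_simps)
  also have "\<dots> = (if b1 + b2 < n then qhom \<omega> j (b1 + b2) * qbinom b2 b1 else 0) * rho_scalar j (b1 + b2)"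
    using assms by (simp only: qhom_mult rho_scalar_mult)
  finally show ?thesis
    unfolding rho_coeff_def by (simp add: ac_simps)
qed

section \<open>The comultiplication and coassociativity\<close>

definition Delta_x :: "(nat \<times> nat) \<times> (nat \<times> nat) \<Rightarrow> 'k" where
  "Delta_x = (\<lambda>t. tens taft_x taft_one t + tens (taft_g n) taft_x t)"

text \<open>\<open>\<Delta>(x)\<^sup>b = \<Sum>\<^sub>k [b, k]\<^sub>\<omega> g\<^sup>k x\<^bsup>b-k\<^esup> \<otimes> x\<^sup>k\<close>: the \<open>q\<close>-binomial theorem for the
  \<open>\<omega>\<close>-commuting summands \<open>x \<otimes> 1\<close> and \<open>g \<otimes> x\<close> of \<open>\<Delta>(x)\<close>.\<close>

definition Delta_x_pow :: "nat \<Rightarrow> (nat \<times> nat) \<times> (nat \<times> nat) \<Rightarrow> 'k" where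
  "Delta_x_pow b = lincomb {..b} (\<lambda>k. qbinom k (b - k)) (\<lambda>k. ((k, b - k), (0, k)))"

lemma HH_mult_pair: "HH_mult n \<omega> (p1, p2) (q1, q2) = tens (taft_mult n \<omega> p1 q1) (taft_mult n \<omega> p2 q2)"
  by (simp add: HH_mult_def tmul_def)

lemma HH_pow_Suc: "HH_pow n \<omega> v (Suc j) = mulv (HH_basis n) (HH_mult n \<omega>) v (HH_pow n \<omega> v j)"
  by (simp add: HH_pow_def powv_def)

lemma Delta_x_mult_Delta_x_pow:
  assumes "Suc b < n"
  shows "mulv (HH_basis n) (HH_mult n \<omega>) Delta_x (Delta_x_pow b) = Delta_x_pow (Suc b)"
proof
  fix t
  define e :: "nat \<Rightarrow> 'k" where "e k = bvec ((k, Suc b - k), (0 :: nat, k)) t" for k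
  have Delta_x_eq: "Delta_x = lincomb {..<2::nat} (\<lambda>_. 1)
      (\<lambda>c. if c = 0 then ((0, 1), (0, 0)) else ((1, 0), (0, 1)))"
    using two_le_n
    by (simp add: Delta_x_def taft_g_def taft_x_def taft_one_def tens_bvec lincomb_def numeral_2_eq_2)
  have "mulv (HH_basis n) (HH_mult n \<omega>) Delta_x (Delta_x_pow b) t =
      (\<Sum>k\<le>b. qbinom k (b - k) * HH_mult n \<omega> ((0, 1), (0, 0)) ((k, b - k), (0, k)) t)
      + (\<Sum>k\<le>b. qbinom k (b - k) * HH_mult n \<omega> ((1, 0), (0, 1)) ((k, b - k), (0, k)) t)"
    unfolding Delta_x_pow_def Delta_x_eq using assms
    by (subst mulv_lincomb) (auto simp: basis_defs numeral_2_eq_2)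
  also have "\<dots> = (\<Sum>k\<le>b. qbinom k (b - k) * \<omega> ^ k * e k) + (\<Sum>k\<le>b. qbinom k (b - k) * e (Suc k))"
    using assms two_le_n
    by (intro arg_cong2[where f = "(+)"] sum.cong refl)
      (auto simp: HH_mult_pair taft_mult_def tens_scale_left_bvec tens_bvec e_def Suc_diff_le)
  also have "\<dots> = (\<Sum>k\<le>Suc b. qbinom k (Suc b - k) * e k)"
    by (rule qbinom_pascal_sum[symmetric])
  also have "\<dots> = Delta_x_pow (Suc b) t"
    by (simp only: Delta_x_pow_def lincomb_def e_def)
  finally show "mulv (HH_basis n) (HH_mult n \<omega>) Delta_x (Delta_x_pow b) t = Delta_x_pow (Suc b) t" .
qed

lemma HH_pow_Delta_x: "b < n \<Longrightarrow> HH_pow n \<omega> Delta_x b = Delta_x_pow b"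
proof (induction b)
  case 0
  then show ?case by (simp add: HH_pow_def powv_def Delta_x_pow_def lincomb_def taft_one_def tens_bvec)
next
  case (Suc b)
  then show ?case by (simp add: HH_pow_Suc Delta_x_mult_Delta_x_pow)
qed

lemma HH_pow_g: "HH_pow n \<omega> (tens (taft_g n) (taft_g n)) a = bvec ((a mod n, 0), (a mod n, 0))"
proof (induction a)
  case 0
  then show ?case by (simp add: HH_pow_def powv_def taft_one_def tens_bvec)
next
  case (Suc a)
  have "HH_pow n \<omega> (tens (taft_g n) (taft_g n)) (Suc a) =
      mulv (HH_basis n) (HH_mult n \<omega>) (bvec ((1, 0), (1, 0))) (bvec ((a mod n, 0), (a mod n, 0)))"
    using two_le_n by (subst HH_pow_Suc, subst Suc, simp add: taft_g_def tens_bvec)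
  also have "\<dots> = bvec ((Suc a mod n, 0), (Suc a mod n, 0))"
    using two_le_n
    by (simp add: mulv_bvec basis_defs HH_mult_pair taft_mult_def tens_scale_bvec tens_bvec mod_Suc_eq)
  finally show ?case .
qed

lemma taft_Delta_eq:
  assumes "a < n" "b < n"
  shows "taft_Delta n \<omega> (a, b) = lincomb {..b} (\<lambda>k. qbinom k (b - k)) (\<lambda>k. (((a + k) mod n, b - k), (a, k)))"
proof -
  have "taft_Delta n \<omega> (a, b) =
      mulv (HH_basis n) (HH_mult n \<omega>) (lincomb {()} (\<lambda>_. 1) (\<lambda>_. ((a, 0), (a, 0)))) (Delta_x_pow b)"
    using assms by (simp add: taft_Delta_def HH_pow_g HH_pow_Delta_x[unfolded Delta_x_def] lincomb_def)
  also have "\<dots> = (\<lambda>t. \<Sum>k\<le>b. qbinom k (b - k) * HH_mult n \<omega> ((a, 0), (a, 0)) ((k, b - k), (0, k)) t)"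
    unfolding Delta_x_pow_def using assms by (subst mulv_lincomb) (auto simp: basis_defs)
  also have "\<dots> = lincomb {..b} (\<lambda>k. qbinom k (b - k)) (\<lambda>k. (((a + k) mod n, b - k), (a, k)))"
    unfolding lincomb_def HH_mult_pair using assms
    by (intro ext sum.cong refl) (simp add: taft_mult_def tens_bvec less_imp_diff_less)
  finally show ?thesis .
qed

lemma rho_bvec: "l < n \<Longrightarrow> rho n \<omega> (bvec l) = lincomb {..<n} (rho_coeff l) (rho_index l)"
  by (simp add: rho_def linext_bvec A_basis_def rho_u_power)

lemma id_rho_rho_u_power:
  "id_rho n \<omega> (HA_pow n \<omega> (rho_u n \<omega>) j) =
   lincomb ({..<n} \<times> {..<n}) (\<lambda>(b1, b2). rho_coeff j b1 * rho_coeff ((b1 + j) mod n) b2)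
     (\<lambda>(b1, b2). ((gexp j b1, b1), rho_index ((b1 + j) mod n) b2))"
proof -
  have "id_rho n \<omega> (HA_pow n \<omega> (rho_u n \<omega>) j) = (\<lambda>t. \<Sum>b<n. rho_coeff j b *
      lincomb {..<n} (rho_coeff ((b + j) mod n)) (\<lambda>b2. ((gexp j b, b), rho_index ((b + j) mod n) b2)) t)"
    unfolding id_rho_def rho_u_power using n_pos
    by (subst linext_lincomb)
      (auto simp: rho_index_def gexp_less basis_defs rho_bvec tens_bvec_lincomb)
  then show ?thesis
    by (simp add: sum_mult_lincomb)
qed

lemma Delta_id_rho_u_power:
  "Delta_id n \<omega> (HA_pow n \<omega> (rho_u n \<omega>) j) =
   lincomb (SIGMA b:{..<n}. {..b}) (\<lambda>(b, k). rho_coeff j b * qbinom k (b - k))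
     (\<lambda>(b, k). (((gexp j b + k) mod n, b - k), ((gexp j b, k), (b + j) mod n)))"
proof -
  have Delta_tens: "(\<lambda>(h1, (h2, l')). tens (taft_Delta n \<omega> (a, b)) (bvec l) ((h1, h2), l')) =
      lincomb {..b} (\<lambda>k. qbinom k (b - k)) (\<lambda>k. (((a + k) mod n, b - k), ((a, k), l)))"
    if "a < n" "b < n" for a b l
    unfolding taft_Delta_eq[OF that]
    by (auto simp: tens_def lincomb_def bvec_def sum_distrib_right intro!: ext sum.cong)
  have "Delta_id n \<omega> (HA_pow n \<omega> (rho_u n \<omega>) j) = (\<lambda>t. \<Sum>b<n. rho_coeff j b *
      lincomb {..b} (\<lambda>k. qbinom k (b - k)) (\<lambda>k. (((gexp j b + k) mod n, b - k), ((gexp j b, k), (b + j) mod n))) t)"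
    unfolding Delta_id_def rho_u_power using n_pos
    by (subst linext_lincomb) (auto simp: rho_index_def gexp_less basis_defs Delta_tens)
  then show ?thesis
    by (simp add: sum_mult_lincomb)
qed

lemma coassoc_rho_u_power:
  assumes "j < n"
  shows "id_rho n \<omega> (HA_pow n \<omega> (rho_u n \<omega>) j) = Delta_id n \<omega> (HA_pow n \<omega> (rho_u n \<omega>) j)"
proof -
  let ?T = "{(b1, b2). b1 < n \<and> b2 < n \<and> b1 + b2 < n}"
  have "id_rho n \<omega> (HA_pow n \<omega> (rho_u n \<omega>) j) =
      lincomb ?T (\<lambda>(b1, b2). rho_coeff j b1 * rho_coeff ((b1 + j) mod n) b2)
        (\<lambda>(b1, b2). ((gexp j b1, b1), rho_index ((b1 + j) mod n) b2))"
    unfolding id_rho_rho_u_power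
    by (rule lincomb_mono_neutral[symmetric]) (auto simp: rho_coeff_mult assms split: if_splits)
  also have "\<dots> = lincomb (SIGMA b:{..<n}. {..b}) (\<lambda>(b, k). rho_coeff j b * qbinom k (b - k))
      (\<lambda>(b, k). (((gexp j b + k) mod n, b - k), ((gexp j b, k), (b + j) mod n)))"
    unfolding lincomb_triangle
  proof (rule lincomb_cong[OF refl])
    fix x assume "x \<in> (SIGMA b:{..<n}. {..b})"
    then obtain b k where x: "x = (b, k)" "b < n" "k \<le> b" by auto
    then show "(\<lambda>(b, k). (\<lambda>(b1, b2). rho_coeff j b1 * rho_coeff ((b1 + j) mod n) b2) (b - k, k)) x =
        (\<lambda>(b, k). rho_coeff j b * qbinom k (b - k)) x"
      using x assms rho_coeff_mult[of j "b - k" k] by simp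
    show "(\<lambda>(b, k). (\<lambda>(b1, b2). ((gexp j b1, b1), rho_index ((b1 + j) mod n) b2)) (b - k, k)) x =
        (\<lambda>(b, k). (((gexp j b + k) mod n, b - k), ((gexp j b, k), (b + j) mod n))) x"
      using x gexp_shift[of j "b - k" k]
      by (simp add: rho_index_def gexp_mod_left mod_add_right_eq add_ac)
  qed
  also have "\<dots> = Delta_id n \<omega> (HA_pow n \<omega> (rho_u n \<omega>) j)"
    by (simp add: Delta_id_rho_u_power)
  finally show ?thesis .
qed

lemma comodule_algebra: "is_comodule_algebra n \<omega>"
proof -
  have "id_rho n \<omega> (rho n \<omega> v) = Delta_id n \<omega> (rho n \<omega> v)" for v
  proof -
    have rho_v: "rho n \<omega> v = (\<lambda>t. \<Sum>j\<in>A_basis n. v j * HA_pow n \<omega> (rho_u n \<omega>) j t)"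
      by (simp add: rho_def linext_def)
    show ?thesis
      unfolding rho_v id_rho_def Delta_id_def linext_sum
      unfolding id_rho_def[symmetric] Delta_id_def[symmetric]
      by (intro ext sum.cong refl) (simp add: A_basis_def coassoc_rho_u_power)
  qed
  then show ?thesis unfolding is_comodule_algebra_def by simp
qed

end

theorem theorem3p9:
  fixes \<omega> :: "'k::field_char_0" and n :: nat
  assumes "2 \<le> n" and "primitive_root n \<omega>"
  shows "is_comodule_algebra n \<omega> \<longleftrightarrow>
    (\<forall>k s. k \<le> n - 1 \<and> s \<le> n - 1 \<longrightarrow>
       tuple_sum \<omega> k s = (if k + s < n then poly (qbinom_poly k s) \<omega> else 0))"
proof -
  interpret taft_setting n \<omega> using assms by unfold_locales
  show ?thesis using comodule_algebra tuple_sum_identity by blast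
qed

end
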